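(* Each of the following thirteen representations $\eta_i:\mathrm{STVB}_2\to M_3(\mathbb{C})$ (for every admissible choice of complex parameters) is unfaithful, i.e. not injective. Each $\eta_i$ is given by $2\times2$ matrices $S,R,T,G$ via $\eta_i(\sigma_1)=S\oplus1$, $\eta_i(\sigma_1^{-1})=S^{-1}\oplus1$, $\eta_i(\rho_1)=R\oplus1$, $\eta_i(\tau_1)=T\oplus1$, $\eta_i(\gamma_1)=G\oplus1$, $\eta_i(\gamma_2)=1\oplus G$: (1) $S=\begin{pmatrix}a&b\\ \frac{b}{x^2}&a\end{pmatrix}$, $R=\begin{pmatrix}0&x\\ \frac1x&0\end{pmatrix}$, $T=\begin{pmatrix}f&g\\ \frac{g}{x^2}&f\end{pmatrix}$, $G=\mathrm{diag}(-1,1)$, $a^2x^2-b^2\neq0$, $x\neq0$; (2) $S=\begin{pmatrix}a&b\\ \frac{b-bz^2}{x^2}&\frac{ax+2bz}{x}\end{pmatrix}$, $R=\begin{pmatrix}-z&x\\ \frac{1-z^2}{x}&z\end{pmatrix}$, $T=\begin{pmatrix}f&g\\ \frac{g-gz^2}{x^2}&\frac{fx+2gz}{x}\end{pmatrix}$, $G=I_2$, $a^2x^2+2abxz-b^2+b^2z^2\neq0$, $x\neq0$; (3) $S=\begin{pmatrix}a&b\\ c&d\end{pmatrix}$, $R=-I_2$, $T=\begin{pmatrix}f&g\\ \frac{cg}{b}&\frac{bf-ag+dg}{b}\end{pmatrix}$, $G=I_2$, $ad-bc\neq0$, $b\neq0$; (4) as (3) but $R=I_2$; (5) $S=aI_2$,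 $R=-I_2$, $T=\begin{pmatrix}f&g\\ h&k\end{pmatrix}$, $G=I_2$, $a\neq0$; (6) $S=\begin{pmatrix}a&0\\ c&d\end{pmatrix}$, $R=-I_2$, $T=\begin{pmatrix}f&0\\ h&\frac{cf-ah+dh}{c}\end{pmatrix}$, $G=I_2$, $ad\neq0$, $c\neq0$; (7) $S=\begin{pmatrix}a&0\\ c&\frac{-2c+ay}{y}\end{pmatrix}$, $R=\begin{pmatrix}1&0\\ y&-1\end{pmatrix}$, $T=\begin{pmatrix}f&0\\ h&\frac{-2h+fy}{y}\end{pmatrix}$, $G=I_2$, $a(-2c+ay)\neq0$, $y\neq0$; (8) $S=\begin{pmatrix}a&0\\ c&\frac{2c+ay}{y}\end{pmatrix}$, $R=\begin{pmatrix}-1&0\\ y&1\end{pmatrix}$, $T=\begin{pmatrix}f&0\\ h&\frac{2h+fy}{y}\end{pmatrix}$, $G=I_2$, $a(2c+ay)\neq0$, $y\neq0$; (9) $S=aI_2$, $R=I_2$, $T=\begin{pmatrix}f&g\\ h&k\end{pmatrix}$, $G=I_2$, $a\neq0$; (10) as (6) but $R=I_2$; (11) $S=\mathrm{diag}(a,d)$, $R=\mathrm{diag}(1,-1)$, $T=\mathrm{diag}(f,k)$, $G=I_2$, $ad\neq0$; (12) $S=\mathrm{diag}(a,d)$, $R=\mathrm{diag}(-1,1)$, $T=\mathrm{diag}(f,k)$, $G=I_2$, $ad\neq0$; (13) $S=\mathrm{diag}(a,d)$, $R=I_2$, $T=\mathrm{diag}(f,k)$, $G=I_2$, $ad\ne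q0$.
   Context: The singular twisted virtual braid monoid $\mathrm{STVB}_2$ is the monoid generated by $\sigma_1,\sigma_1^{-1},\rho_1,\tau_1,\gamma_1,\gamma_2$ with defining relations $\sigma_1\sigma_1^{-1}=\sigma_1^{-1}\sigma_1=1$, $\rho_1^2=1$, $\gamma_1^2=\gamma_2^2=1$, $\gamma_1\gamma_2=\gamma_2\gamma_1$, $\rho_1\gamma_1=\gamma_2\rho_1$, $\rho_1\sigma_1\rho_1=\gamma_2\gamma_1\sigma_1\gamma_1\gamma_2$, $\sigma_1\tau_1=\tau_1\sigma_1$, $\rho_1\tau_1\rho_1=\gamma_2\gamma_1\tau_1\gamma_1\gamma_2$. A representation of $\mathrm{STVB}_2$ in $M_3(\mathbb{C})$ is a monoid homomorphism; it is faithful if injective. For a $2\times2$ matrix $M$, $M\oplus1=\begin{pmatrix}M&0\\0&1\end{pmatrix}$ and $1\oplus M=\begin{pmatrix}1&0\\0&M\end{pmatrix}$. *)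

theory Defs
  imports Complex_Main "Jordan_Normal_Form.Matrix"
begin

datatype gen = Sig | SigInv | Rho | Tau | Gam1 | Gam2

definition stvb_rels :: "(gen list \<times> gen list) set" where
  "stvb_rels =
    {([Sig, SigInv], []), ([SigInv, Sig], []),
     ([Rho, Rho], []), ([Gam1, Gam1], []), ([Gam2, Gam2], []),
     ([Gam1, Gam2], [Gam2, Gam1]),
     ([Rho, Gam1], [Gam2, Rho]),
     ([Rho, Sig, Rho], [Gam2, Gam1, Sig, Gam1, Gam2]),
     ([Sig, Tau], [Tau, Sig]),
     ([Rho, Tau, Rho], [Gam2, Gam1, Tau, Gam1, Gam2])}"

text \<open>The monoid congruence on words generated by the relations;
  STVB_2 is the quotient of the free monoid by this congruence.\<close>
inductive stvb_eq :: "gen list \<Rightarrow> gen list \<Rightarrow> bool" where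
  rel: "(u, v) \<in> stvb_rels \<Longrightarrow> stvb_eq (p @ u @ q) (p @ v @ q)"
| refl: "stvb_eq w w"
| sym: "stvb_eq u v \<Longrightarrow> stvb_eq v u"
| trans: "stvb_eq u v \<Longrightarrow> stvb_eq v w \<Longrightarrow> stvb_eq u w"

definition word_eval :: "(gen \<Rightarrow> complex mat) \<Rightarrow> gen list \<Rightarrow> complex mat" where
  "word_eval \<eta> w = foldr (\<lambda>g M. \<eta> g * M) w (1\<^sub>m 3)"

definition unfaithful :: "(gen \<Rightarrow> complex mat) \<Rightarrow> bool" where
  "unfaithful \<eta> \<longleftrightarrow> (\<exists>u v. \<not> stvb_eq u v \<and> word_eval \<eta> u = word_eval \<eta> v)"

definition mat2 :: "complex \<Rightarrow> complex \<Rightarrow> complex \<Rightarrow> complex \<Rightarrow> complex mat" where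
  "mat2 a b c d = mat_of_rows_list 2 [[a, b], [c, d]]"

definition inv2 :: "complex mat \<Rightarrow> complex mat" where
  "inv2 M = (let a = M $$ (0,0); b = M $$ (0,1); c = M $$ (1,0); d = M $$ (1,1);
               \<delta> = a * d - b * c in mat2 (d / \<delta>) (- b / \<delta>) (- c / \<delta>) (a / \<delta>))"

definition oplus1 :: "complex mat \<Rightarrow> complex mat" where
  "oplus1 M = four_block_mat M (0\<^sub>m 2 1) (0\<^sub>m 1 2) (1\<^sub>m 1)"

definition one_oplus :: "complex mat \<Rightarrow> complex mat" where
  "one_oplus M = four_block_mat (1\<^sub>m 1) (0\<^sub>m 1 2) (0\<^sub>m 2 1) M"

fun eta :: "complex mat \<Rightarrow> complex mat \<Rightarrow> complex mat \<Rightarrow> complex mat \<Rightarrow> gen \<Rightarrow> complex mat" where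
  "eta S R T G Sig = oplus1 S"
| "eta S R T G SigInv = oplus1 (inv2 S)"
| "eta S R T G Rho = oplus1 R"
| "eta S R T G Tau = oplus1 T"
| "eta S R T G Gam1 = oplus1 G"
| "eta S R T G Gam2 = one_oplus G"

end

theory Submission
  imports Defs
begin

text \<open>Two elementary obstructions suffice. In representations (2)--(13) we have \<open>G = I\<^sub>2\<close>,
  so \<open>\<gamma>\<^sub>1\<close> is sent to the identity. In representation (1) the matrix \<open>S\<close> equals
  \<open>a I\<^sub>2 + (b/x) R\<close>, so \<open>\<rho>\<^sub>1\<sigma>\<^sub>1\<close> and \<open>\<sigma>\<^sub>1\<rho>\<^sub>1\<close> have the same image.
  Neither \<open>\<gamma>\<^sub>1 = 1\<close> nor \<open>\<rho>\<^sub>1\<sigma>\<^sub>1 = \<sigma>\<^sub>1\<rho>\<^sub>1\<close> holds in \<open>STVB\<^sub>2\<close>, as the action of the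
  monoid on \<open>\<int>\<^sup>2\<close> in which \<open>\<sigma>\<^sub>1\<close> translates by \<open>(1,-1)\<close>, \<open>\<tau>\<^sub>1\<close> is trivial, \<open>\<rho>\<^sub>1\<close> swaps
  the coordinates and \<open>\<gamma>\<^sub>1\<close>, \<open>\<gamma>\<^sub>2\<close> negate the first resp. second coordinate shows.\<close>

lemma foldr_eq_if_stvb_eq:
  assumes "\<And>u v. (u, v) \<in> stvb_rels \<Longrightarrow> foldr \<phi> u = foldr \<phi> v"
    and "stvb_eq u v"
  shows "foldr \<phi> u = foldr \<phi> v"
  using assms(2) by induction (auto simp: assms(1))

fun plane_action :: "gen \<Rightarrow> int \<times> int \<Rightarrow> int \<times> int" where
  "plane_action Sig (x, y) = (x + 1, y - 1)"
| "plane_action SigInv (x, y) = (x - 1, y + 1)"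
| "plane_action Rho (x, y) = (y, x)"
| "plane_action Tau p = p"
| "plane_action Gam1 (x, y) = (- x, y)"
| "plane_action Gam2 (x, y) = (x, - y)"

lemma plane_action_respects_stvb_rels:
  "(u, v) \<in> stvb_rels \<Longrightarrow> foldr plane_action u = foldr plane_action v"
  unfolding stvb_rels_def by (auto intro!: ext)

lemma not_stvb_eq_if_plane_action_differs:
  "foldr plane_action u p \<noteq> foldr plane_action v p \<Longrightarrow> \<not> stvb_eq u v"
  using foldr_eq_if_stvb_eq[OF plane_action_respects_stvb_rels] by metis

lemma not_stvb_eq_Gam1_Nil: "\<not> stvb_eq [Gam1] []"
  by (rule not_stvb_eq_if_plane_action_differs[where p = "(1, 0)"]) simp

lemma not_stvb_eq_Rho_Sig_commute: "\<not> stvb_eq [Rho, Sig] [Sig, Rho]"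
  by (rule not_stvb_eq_if_plane_action_differs[where p = "(0, 0)"]) simp

lemma unfaithful_if_Gam1_identity:
  "\<eta> Gam1 = 1\<^sub>m 3 \<Longrightarrow> unfaithful \<eta>"
  unfolding unfaithful_def word_eval_def
  using not_stvb_eq_Gam1_Nil by force

lemma unfaithful_if_Rho_Sig_commute:
  assumes "\<eta> Rho \<in> carrier_mat 3 3" "\<eta> Sig \<in> carrier_mat 3 3"
    and "\<eta> Rho * \<eta> Sig = \<eta> Sig * \<eta> Rho"
  shows "unfaithful \<eta>"
  unfolding unfaithful_def word_eval_def
  using not_stvb_eq_Rho_Sig_commute assms by force

lemma oplus1_carrier_mat: "A \<in> carrier_mat 2 2 \<Longrightarrow> oplus1 A \<in> carrier_mat 3 3"
  unfolding oplus1_def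
  using four_block_carrier_mat[of A 2 2 "1\<^sub>m 1" 1 1 "0\<^sub>m 2 1" "0\<^sub>m 1 2"] by simp

lemma oplus1_one: "oplus1 (1\<^sub>m 2) = 1\<^sub>m 3"
  unfolding oplus1_def using four_block_one_mat[of 2 1] by simp

lemma oplus1_mult:
  "A \<in> carrier_mat 2 2 \<Longrightarrow> B \<in> carrier_mat 2 2 \<Longrightarrow> oplus1 A * oplus1 B = oplus1 (A * B)"
  unfolding oplus1_def
  by (subst mult_four_block_mat[of A 2 2 "0\<^sub>m 2 1" 1 "0\<^sub>m 1 2" 1 "1\<^sub>m 1" B 2 "0\<^sub>m 2 1" 1
        "0\<^sub>m 1 2" "1\<^sub>m 1"]) simp_all

lemma unfaithful_eta_G_one: "unfaithful (eta S R T (1\<^sub>m 2))"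
  by (rule unfaithful_if_Gam1_identity) (simp add: oplus1_one)

lemma unfaithful_eta_if_commute:
  assumes "S \<in> carrier_mat 2 2" "R \<in> carrier_mat 2 2" and "R * S = S * R"
  shows "unfaithful (eta S R T G)"
  by (rule unfaithful_if_Rho_Sig_commute) (simp_all add: assms oplus1_carrier_mat oplus1_mult)

lemma mat2_carrier_mat: "mat2 a b c d \<in> carrier_mat 2 2"
  unfolding mat2_def mat_of_rows_list_def by (simp add: numeral_2_eq_2)

lemma mat2_mult:
  "mat2 a b c d * mat2 a' b' c' d' = mat2 (a*a' + b*c') (a*b' + b*d') (c*a' + d*c') (c*b' + d*d')"
  by (rule eq_matI)
    (auto simp: mat2_def mat_of_rows_list_def scalar_prod_def row_def col_def
      numeral_2_eq_2 less_Suc_eq)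

lemma unfaithful_eta_case1:
  assumes "x \<noteq> 0"
  shows "unfaithful (eta (mat2 a b (b / x^2) a) (mat2 0 x (1 / x) 0) T G)"
proof (rule unfaithful_eta_if_commute[OF mat2_carrier_mat mat2_carrier_mat])
  show "mat2 0 x (1 / x) 0 * mat2 a b (b / x^2) a = mat2 a b (b / x^2) a * mat2 0 x (1 / x) 0"
    unfolding mat2_mult using assms by (simp add: field_simps power2_eq_square)
qed

theorem theorem4p2:
  shows
  "(\<forall>a b x f g. a^2 * x^2 - b^2 \<noteq> 0 \<and> x \<noteq> 0 \<longrightarrow>
      unfaithful (eta (mat2 a b (b / x^2) a) (mat2 0 x (1 / x) 0) (mat2 f g (g / x^2) f) (mat2 (-1) 0 0 1)))
 \<and> (\<forall>a b x z f g. a^2 * x^2 + 2 * a * b * x * z - b^2 + b^2 * z^2 \<noteq> 0 \<and> x \<noteq> 0 \<longrightarrow>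
      unfaithful (eta (mat2 a b ((b - b * z^2) / x^2) ((a * x + 2 * b * z) / x))
                      (mat2 (-z) x ((1 - z^2) / x) z)
                      (mat2 f g ((g - g * z^2) / x^2) ((f * x + 2 * g * z) / x)) (1\<^sub>m 2)))
 \<and> (\<forall>a b c d f g. a * d - b * c \<noteq> 0 \<and> b \<noteq> 0 \<longrightarrow>
      unfaithful (eta (mat2 a b c d) (- 1\<^sub>m 2) (mat2 f g (c * g / b) ((b * f - a * g + d * g) / b)) (1\<^sub>m 2)))
 \<and> (\<forall>a b c d f g. a * d - b * c \<noteq> 0 \<and> b \<noteq> 0 \<longrightarrow>
      unfaithful (eta (mat2 a b c d) (1\<^sub>m 2) (mat2 f g (c * g / b) ((b * f - a * g + d * g) / b)) (1\<^sub>m 2)))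
 \<and> (\<forall>a f g h k. a \<noteq> 0 \<longrightarrow>
      unfaithful (eta (mat2 a 0 0 a) (- 1\<^sub>m 2) (mat2 f g h k) (1\<^sub>m 2)))
 \<and> (\<forall>a c d f h. a * d \<noteq> 0 \<and> c \<noteq> 0 \<longrightarrow>
      unfaithful (eta (mat2 a 0 c d) (- 1\<^sub>m 2) (mat2 f 0 h ((c * f - a * h + d * h) / c)) (1\<^sub>m 2)))
 \<and> (\<forall>a c y f h. a * (-2 * c + a * y) \<noteq> 0 \<and> y \<noteq> 0 \<longrightarrow>
      unfaithful (eta (mat2 a 0 c ((-2 * c + a * y) / y)) (mat2 1 0 y (-1))
                      (mat2 f 0 h ((-2 * h + f * y) / y)) (1\<^sub>m 2)))
 \<and> (\<forall>a c y f h. a * (2 * c + a * y) \<noteq> 0 \<and> y \<noteq> 0 \<longrightarrow>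
      unfaithful (eta (mat2 a 0 c ((2 * c + a * y) / y)) (mat2 (-1) 0 y 1)
                      (mat2 f 0 h ((2 * h + f * y) / y)) (1\<^sub>m 2)))
 \<and> (\<forall>a f g h k. a \<noteq> 0 \<longrightarrow>
      unfaithful (eta (mat2 a 0 0 a) (1\<^sub>m 2) (mat2 f g h k) (1\<^sub>m 2)))
 \<and> (\<forall>a c d f h. a * d \<noteq> 0 \<and> c \<noteq> 0 \<longrightarrow>
      unfaithful (eta (mat2 a 0 c d) (1\<^sub>m 2) (mat2 f 0 h ((c * f - a * h + d * h) / c)) (1\<^sub>m 2)))
 \<and> (\<forall>a d f k. a * d \<noteq> 0 \<longrightarrow>
      unfaithful (eta (mat2 a 0 0 d) (mat2 1 0 0 (-1)) (mat2 f 0 0 k) (1\<^sub>m 2)))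
 \<and> (\<forall>a d f k. a * d \<noteq> 0 \<longrightarrow>
      unfaithful (eta (mat2 a 0 0 d) (mat2 (-1) 0 0 1) (mat2 f 0 0 k) (1\<^sub>m 2)))
 \<and> (\<forall>a d f k. a * d \<noteq> 0 \<longrightarrow>
      unfaithful (eta (mat2 a 0 0 d) (1\<^sub>m 2) (mat2 f 0 0 k) (1\<^sub>m 2)))"
  by (simp add: unfaithful_eta_case1 unfaithful_eta_G_one)

end
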